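(* Let $\widetilde A=\sum_{r=p}^qT^r\otimes a_r$ ($p\le q$ integers, $a_r\in\mathbb{C}_d$) be a Fredholm banded block-Toeplitz operator on $\ell^2(\mathbb{N})\otimes\mathbb{C}^d$, and for $\kappa\in\mathbb{Z}$ let $\widetilde A_\kappa:=\sum_{r=p}^qT^{\,r-p-\kappa}\otimes a_r$. Then for every $\kappa$, $\mathrm{Ker}\,\widetilde A_\kappa+T^\dagger\mathrm{Ker}\,\widetilde A_\kappa\subseteq\mathrm{Ker}\,\widetilde A_{\kappa-1}$; choose any subspace $\mathcal{D}_\kappa$ with $\mathrm{Ker}\,\widetilde A_{\kappa-1}=(\mathrm{Ker}\,\widetilde A_\kappa+T^\dagger\mathrm{Ker}\,\widetilde A_\kappa)\oplus\mathcal{D}_\kappa$ (algebraic direct sum) and set $s_\kappa:=\dim\mathcal{D}_\kappa$. Then: (1) $\mathrm{Ker}\,\widetilde A_\kappa=\{0\}$ for all $\kappa\ge q-p$; (2) for $\kappa<q-p$, $\mathrm{Ker}\,\widetilde A_\kappa$ is the direct sum $\bigoplus_{\kappa'=\kappa+1}^{q-p}\bigoplus_{r=0}^{\kappa'-\kappa-1}(T^\dagger)^r\mathcal{D}_{\kappa'}$, so $\dim\mathrm{Ker}\,\widetilde A_\kappa=\sum_{\kappa'=\kappa+1}^{q-p}(\kappa'-\kappa)s_{\kappa'}$; (3) $s_\kappa=0$ whenever $\kappa>q-p$ or $\kappa<0$; (4) $\sum_{\kappa=0}^{q-p}s_\kappa=d$.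
   Context: $\mathbb{N}=\{0,1,2,\dots\}$; $T$ is the shift on $\ell^2(\mathbb{N})$ with $T|j\rangle=|j-1\rangle$ for $j\ge1$ and $T|0\rangle=0$ (so $TT^\dagger=I$, $T^\dagger T=I-|0\rangle\langle0|$), acting as $T\otimes I_d$ on $\ell^2(\mathbb{N})\otimes\mathbb{C}^d$; $T^r:=(T^\dagger)^{|r|}$ for $r<0$. Equivalently $\widetilde A_{-p}=\widetilde A$, $\widetilde A_{\kappa-1}=T\widetilde A_\kappa$ and $\widetilde A_{\kappa+1}=\widetilde A_\kappa T^\dagger$. A Fredholm operator has closed range and finite-dimensional kernel and cokernel. *)

theory Defs
  imports "HOL-Analysis.Analysis" "HOL-Library.Function_Algebras"
begin

text \<open>Elements of l2(N) tensor C^d are modelled as sequences x :: nat => complex^'d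
  (the index type 'd is finite with CARD('d) = d); l2 is the set of square-summable ones.\<close>

type_synonym 'd seq = "nat \<Rightarrow> complex^'d"

definition l2 :: "'d::finite seq set" where
  "l2 = {x. summable (\<lambda>j. (norm (x j))\<^sup>2)}"

definition l2norm :: "'d::finite seq \<Rightarrow> real" where
  "l2norm x = sqrt (\<Sum>j. (norm (x j))\<^sup>2)"

definition scaleS :: "complex \<Rightarrow> 'd::finite seq \<Rightarrow> 'd seq" where
  "scaleS c x = (\<lambda>j. c *s x j)"

abbreviation cspan :: "'d::finite seq set \<Rightarrow> 'd seq set" where
  "cspan \<equiv> module.span scaleS"

abbreviation csubspace :: "'d::finite seq set \<Rightarrow> bool" where
  "csubspace \<equiv> module.subspace scaleS"

abbreviation cdim :: "'d::finite seq set \<Rightarrow> nat" where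
  "cdim \<equiv> vector_space.dim scaleS"

text \<open>Shift powers: T e_j = e_(j-1), T e_0 = 0, so (T x)_i = x_(i+1);
  T^r = (T^dagger)^|r| for r < 0, with (T^dagger x)_i = x_(i-1), (T^dagger x)_0 = 0.\<close>

definition Tpow :: "int \<Rightarrow> 'd::finite seq \<Rightarrow> 'd seq" where
  "Tpow r x = (if r \<ge> 0 then (\<lambda>j. x (j + nat r))
               else (\<lambda>j. if nat (- r) \<le> j then x (j - nat (- r)) else 0))"

definition Akappa :: "int \<Rightarrow> int \<Rightarrow> (int \<Rightarrow> complex^'d^'d) \<Rightarrow> int \<Rightarrow> 'd::finite seq \<Rightarrow> 'd seq" where
  "Akappa p q a \<kappa> x = (\<lambda>j. \<Sum>r\<in>{p..q}. a r *v Tpow (r - p - \<kappa>) x j)"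

definition Ker :: "('d::finite seq \<Rightarrow> 'd seq) \<Rightarrow> 'd seq set" where
  "Ker A = {x \<in> l2. A x = 0}"

definition setplus :: "'d::finite seq set \<Rightarrow> 'd seq set \<Rightarrow> 'd seq set" where
  "setplus U V = {u + v | u v. u \<in> U \<and> v \<in> V}"

text \<open>Fredholm on l2: closed range (in the l2 norm), finite-dimensional kernel,
  finite-dimensional cokernel (range has a finite-dimensional algebraic complement).\<close>

definition fredholm_l2 :: "('d::finite seq \<Rightarrow> 'd seq) \<Rightarrow> bool" where
  "fredholm_l2 A \<longleftrightarrow>
     A ` l2 \<subseteq> l2 \<and>
     (\<forall>y z. (\<forall>n. y n \<in> A ` l2) \<and> z \<in> l2 \<and> (\<lambda>n. l2norm (y n - z)) \<longlonglongrightarrow> 0 \<longrightarrow> z \<in> A ` l2) \<and>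
     (\<exists>B. finite B \<and> Ker A \<subseteq> cspan B) \<and>
     (\<exists>B. finite B \<and> B \<subseteq> l2 \<and> l2 \<subseteq> setplus (A ` l2) (cspan B))"

definition is_direct_sum :: "'i set \<Rightarrow> ('i \<Rightarrow> 'd::finite seq set) \<Rightarrow> 'd seq set \<Rightarrow> bool" where
  "is_direct_sum I U V \<longleftrightarrow>
     V = {(\<Sum>i\<in>I. f i) | f. \<forall>i\<in>I. f i \<in> U i} \<and>
     (\<forall>f. (\<forall>i\<in>I. f i \<in> U i) \<and> (\<Sum>i\<in>I. f i) = 0 \<longrightarrow> (\<forall>i\<in>I. f i = 0))"

end

theory Submission
  imports Defs
begin

(* Write K k for Ker A_k and T' for the adjoint shift Tpow (-1).  Since T A_k = A_(k-1) and
   A_k T' = A_(k+1), the kernels decrease in k, T' x lies in K k exactly when x lies in K (k+1),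
   and K k is constant for k >= q - p.  Fredholmness enters twice.  K (-p) is finite-dimensional,
   so the T'-invariant subspace K (q-p), which lies inside it, is zero: the powers of T' applied
   to a nonzero y are linearly independent.  The range of A_0 has finite codimension and is
   invariant under T, so it contains every sequence supported at 0; hence evaluation at 0 maps
   K (k-1) onto C^d with kernel K k for k <= 0, and dim K (k-1) = dim K k + d there.
   The block decomposition of K k is proved by downward induction from k = q - p: if K k is the
   direct sum of its blocks, it splits as W + T' K (k+1), W being the sum of the blocks with
   r = 0; as K k meets T' K k only inside T' K (k+1), the sum K k + T' K k is the direct sum
   W + T' K k, and adding D k gives the decomposition of K (k-1).  Counting dimensions in it
   gives the formula for dim K k, and comparing with dim K (k-1) - dim K k = d for k <= 0 shows
   that the s k vanish for k < 0 and add up to d. *)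

interpretation cseq: vector_space scaleS
  by unfold_locales (auto simp: scaleS_def fun_eq_iff vector_add_ldistrib vector_sadd_rdistrib)

interpretation cseq_pair: vector_space_pair scaleS scaleS ..

interpretation cseq_vec: vector_space_pair scaleS "(*s) :: complex \<Rightarrow> complex^'e::finite \<Rightarrow> complex^'e" ..

lemma scaleS_apply: "scaleS c x j = c *s x j"
  by (simp add: scaleS_def)

lemma sum_apply: "(\<Sum>i\<in>I. f i) j = (\<Sum>i\<in>I. f i j)"
  by (induction I rule: infinite_finite_induct) auto

lemma norm_vector_scalar_mult: "norm (c *s (v::complex^'n::finite)) = norm c * norm v"
proof -
  have "norm (c *s v) = sqrt ((norm c)\<^sup>2 * (\<Sum>i\<in>UNIV. (norm (v $ i))\<^sup>2))"
    by (simp add: norm_vec_def L2_set_def norm_mult power_mult_distrib sum_distrib_left)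
  then show ?thesis
    by (simp add: norm_vec_def L2_set_def real_sqrt_mult)
qed

lemma l2_add:
  assumes "x \<in> l2" "y \<in> l2"
  shows "x + y \<in> l2"
proof -
  have "(norm ((x + y) j))\<^sup>2 \<le> 2 * (norm (x j))\<^sup>2 + 2 * (norm (y j))\<^sup>2" for j
  proof -
    have "(norm ((x + y) j))\<^sup>2 \<le> (norm (x j) + norm (y j))\<^sup>2"
      by (simp add: norm_triangle_ineq power_mono)
    also have "\<dots> \<le> 2 * (norm (x j))\<^sup>2 + 2 * (norm (y j))\<^sup>2"
      by (smt (verit) sum_squares_bound power2_sum)
    finally show ?thesis .
  qed
  moreover have "summable (\<lambda>j. 2 * (norm (x j))\<^sup>2 + 2 * (norm (y j))\<^sup>2)"
    using assms by (auto simp: l2_def intro!: summable_add summable_mult)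
  ultimately show ?thesis
    unfolding l2_def by (auto intro: summable_comparison_test')
qed

lemma l2_scaleS: "x \<in> l2 \<Longrightarrow> scaleS c x \<in> l2"
  by (auto simp: l2_def scaleS_apply norm_vector_scalar_mult power_mult_distrib intro!: summable_mult)

lemma csubspace_l2: "csubspace l2"
  by (auto simp: cseq.subspace_def l2_add l2_scaleS) (simp add: l2_def)

lemma Tpow_apply:
  "Tpow s x j = (if 0 \<le> s then x (j + nat s) else if nat (- s) \<le> j then x (j - nat (- s)) else 0)"
  by (simp add: Tpow_def)

lemma Tpow_Tpow: "0 \<le> s \<or> t \<le> 0 \<Longrightarrow> Tpow s (Tpow t x) = Tpow (s + t) x"
  by (rule ext) (auto simp: Tpow_apply intro!: arg_cong[where f = x]; arith)

lemma Tpow_0 [simp]: "Tpow 0 x = x"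
  by (simp add: Tpow_def)

lemma Tpow_zero [simp]: "Tpow s 0 = 0"
  by (rule ext) (simp add: Tpow_apply)

lemma Tpow_one_apply: "Tpow 1 x j = x (Suc j)"
  by (simp add: Tpow_def)

lemma Tpow_adjoint_apply: "Tpow (-1) x j = (if j = 0 then 0 else x (j - 1))"
  by (simp add: Tpow_def)

lemma Tpow_adjoint_power_apply: "Tpow (- int n) x j = (if n \<le> j then x (j - n) else 0)"
  by (auto simp: Tpow_def)

lemma Tpow_add_apply: "Tpow s (x + y) j = Tpow s x j + Tpow s y j"
  by (simp add: Tpow_apply)

lemma Tpow_scaleS_apply: "Tpow s (scaleS c x) j = c *s Tpow s x j"
  by (simp add: Tpow_apply scaleS_apply)

lemma linear_Tpow: "Vector_Spaces.linear scaleS scaleS (Tpow s)"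
  by (auto simp: Vector_Spaces.linear_iff cseq.vector_space_axioms Tpow_def fun_eq_iff scaleS_apply)

lemma inj_Tpow_nonpos:
  assumes "s \<le> 0"
  shows "inj (Tpow s)"
proof (rule inj_on_inverseI)
  show "Tpow (- s) (Tpow s x) = x" for x
    using assms by (simp add: Tpow_Tpow)
qed

lemma l2_Tpow:
  assumes "x \<in> l2"
  shows "Tpow s x \<in> l2"
proof (cases "0 \<le> s")
  case True
  then show ?thesis
    using assms summable_iff_shift[of "\<lambda>j. (norm (x j))\<^sup>2" "nat s"] by (simp add: l2_def Tpow_def)
next
  case False
  define g where "g = (\<lambda>j. (norm (Tpow s x j))\<^sup>2)"
  have "g (j + nat (- s)) = (norm (x j))\<^sup>2" for j
    using False by (simp add: g_def Tpow_def)
  then have "summable (\<lambda>j. g (j + nat (- s)))"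
    using assms by (simp add: l2_def)
  then have "summable g"
    by (rule summable_iff_shift[THEN iffD1])
  then show ?thesis
    by (simp add: g_def l2_def)
qed

lemma eq_0_iff_Tpow_one: "y = 0 \<longleftrightarrow> Tpow 1 y = 0 \<and> y 0 = (0::complex^'d)"
  unfolding fun_eq_iff Tpow_one_apply zero_fun_def by (metis old.nat.exhaust)

definition cfinite_dim :: "'d::finite seq set \<Rightarrow> bool" where
  "cfinite_dim V \<longleftrightarrow> (\<exists>B. finite B \<and> V \<subseteq> cspan B)"

lemma cfinite_dim_subset: "U \<subseteq> V \<Longrightarrow> cfinite_dim V \<Longrightarrow> cfinite_dim U"
  unfolding cfinite_dim_def by blast

lemma cfinite_dim_span: "finite B \<Longrightarrow> cfinite_dim (cspan B)"
  unfolding cfinite_dim_def by blast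

lemma cfinite_dim_basis:
  assumes "cfinite_dim V"
  obtains B where "finite B" "B \<subseteq> V" "cseq.independent B" "V \<subseteq> cspan B" "card B = cdim V"
proof -
  obtain B0 where B0: "finite B0" "V \<subseteq> cspan B0"
    using assms cfinite_dim_def by blast
  obtain B where B: "B \<subseteq> V" "cseq.independent B" "V \<subseteq> cspan B" "card B = cdim V"
    using cseq.basis_exists by blast
  moreover have "finite B"
    using cseq.independent_span_bound[OF B0(1) B(2)] B(1) B0(2) by blast
  ultimately show ?thesis
    using that by blast
qed

lemma cdim_zero: "cdim {0 :: 'd::finite seq} = 0"
  by (metis cseq.dim_span cseq.span_empty cseq.dim_eq_card_independent cseq.independent_empty card.empty)

lemma setplus_subset: "csubspace W \<Longrightarrow> U \<subseteq> W \<Longrightarrow> V \<subseteq> W \<Longrightarrow> setplus U V \<subseteq> W"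
  unfolding setplus_def by (auto intro: cseq.subspace_add)

lemma setplus_absorb:
  assumes "csubspace Z" "Y \<subseteq> Z" "0 \<in> Y"
  shows "setplus (setplus X Y) Z = setplus X Z"
proof
  show "setplus (setplus X Y) Z \<subseteq> setplus X Z"
    using assms cseq.subspace_add[OF assms(1)] by (fastforce simp: setplus_def add.assoc)
  show "setplus X Z \<subseteq> setplus (setplus X Y) Z"
  proof
    fix w assume "w \<in> setplus X Z"
    then obtain x z where w: "w = x + z" "x \<in> X" "z \<in> Z"
      by (auto simp: setplus_def)
    have "x \<in> setplus X Y"
      unfolding setplus_def using w(2) assms(3) by (intro CollectI exI[of _ x] exI[of _ 0]) simp
    then show "w \<in> setplus (setplus X Y) Z"
      unfolding setplus_def[of "setplus X Y"] using w by blast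
  qed
qed

lemma cdim_setplus:
  assumes U: "csubspace U" "cfinite_dim U" and V: "csubspace V" "cfinite_dim V"
    and UV: "U \<inter> V \<subseteq> {0}"
  shows "cfinite_dim (setplus U V) \<and> cdim (setplus U V) = cdim U + cdim V"
proof -
  obtain BU where BU: "finite BU" "BU \<subseteq> U" "cseq.independent BU" "U \<subseteq> cspan BU" "card BU = cdim U"
    using cfinite_dim_basis[OF U(2)] by blast
  obtain BV where BV: "finite BV" "BV \<subseteq> V" "cseq.independent BV" "V \<subseteq> cspan BV" "card BV = cdim V"
    using cfinite_dim_basis[OF V(2)] by blast
  have span: "cspan (BU \<union> BV) = setplus U V"
    using BU BV U V by (simp add: cseq.span_Un cseq.span_subspace setplus_def)
  have disjoint: "BU \<inter> BV = {}"
  proof -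
    have "BU \<inter> BV \<subseteq> {0}"
      using UV BU(2) BV(2) by blast
    moreover have "0 \<notin> BU"
      using BU(3) cseq.dependent_zero by blast
    ultimately show ?thesis
      by blast
  qed
  have "cseq.independent (BU \<union> BV)"
  proof (rule cseq.independent_if_scalars_zero)
    fix c x
    assume zero: "(\<Sum>x\<in>BU \<union> BV. scaleS (c x) x) = 0" and x: "x \<in> BU \<union> BV"
    define u where "u = (\<Sum>x\<in>BU. scaleS (c x) x)"
    define v where "v = (\<Sum>x\<in>BV. scaleS (c x) x)"
    have sum_uv: "u + v = 0"
      using zero by (simp add: u_def v_def sum.union_disjoint[OF BU(1) BV(1) disjoint])
    have u: "u \<in> U" and v: "v \<in> V"
      using BU(2) BV(2) U(1) V(1) by (auto simp: u_def v_def intro!: cseq.subspace_sum cseq.subspace_scale)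
    have "u = - v"
      using sum_uv by (simp add: eq_neg_iff_add_eq_0)
    then have "u \<in> V"
      using cseq.subspace_neg[OF V(1) v] by simp
    then have "u = 0" "v = 0"
      using UV u sum_uv by auto
    then show "c x = 0"
      using x cseq.independentD[OF BU(3) BU(1) subset_refl] cseq.independentD[OF BV(3) BV(1) subset_refl]
      by (auto simp: u_def v_def)
  qed (use BU BV in simp)
  then have "cdim (setplus U V) = card (BU \<union> BV)"
    using span by (metis cseq.dim_span cseq.dim_eq_card_independent)
  also have "\<dots> = cdim U + cdim V"
    using card_Un_disjoint[OF BU(1) BV(1) disjoint] BU(5) BV(5) by simp
  finally show ?thesis
    using span BU(1) BV(1) cfinite_dim_span[of "BU \<union> BV"] by simp
qed

lemma cdim_linear_image:
  assumes f: "Vector_Spaces.linear scaleS scaleS f" "inj f" and V: "csubspace V" "cfinite_dim V"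
  shows "cfinite_dim (f ` V) \<and> cdim (f ` V) = cdim V"
proof -
  obtain B where B: "finite B" "B \<subseteq> V" "cseq.independent B" "V \<subseteq> cspan B" "card B = cdim V"
    using cfinite_dim_basis[OF V(2)] by blast
  have span: "cspan (f ` B) = f ` V"
    using cseq_pair.linear_span_image[OF f(1)] B V by (simp add: cseq.span_subspace)
  have "cseq.independent (f ` B)"
    using cseq_pair.linear_independent_injective_image[OF f(1) B(3)] f(2) by (simp add: inj_on_def)
  then have "cdim (f ` V) = card (f ` B)"
    using span by (metis cseq.dim_span cseq.dim_eq_card_independent)
  also have "\<dots> = cdim V"
    using f(2) B(5) by (simp add: card_image inj_on_def)
  finally show ?thesis
    using span B(1) cfinite_dim_span[of "f ` B"] by simp
qed

lemma independent_if_independent_image: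
  fixes \<phi> :: "'d::finite seq \<Rightarrow> complex^'e::finite"
  assumes lin: "Vector_Spaces.linear scaleS (*s) \<phi>" and P: "finite P" "inj_on \<phi> P"
    and indep: "vec.independent (\<phi> ` P)"
  shows "cseq.independent P"
proof (rule cseq.independent_if_scalars_zero[OF P(1)])
  fix c x
  assume zero: "(\<Sum>x\<in>P. scaleS (c x) x) = 0" and x: "x \<in> P"
  have "(\<Sum>b\<in>\<phi> ` P. c (the_inv_into P \<phi> b) *s b) = \<phi> (\<Sum>x\<in>P. scaleS (c x) x)"
    by (simp add: sum.reindex[OF P(2)] the_inv_into_f_f[OF P(2)] cseq_vec.linear_sum[OF lin]
        cseq_vec.linear_scale[OF lin])
  then have "(\<Sum>b\<in>\<phi> ` P. c (the_inv_into P \<phi> b) *s b) = 0"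
    using zero cseq_vec.linear_0[OF lin] by simp
  then have "c (the_inv_into P \<phi> (\<phi> x)) = 0"
    by (rule vec.independentD[OF indep finite_imageI[OF P(1)] subset_refl _ imageI[OF x]])
  then show "c x = 0"
    using the_inv_into_f_f[OF P(2) x] by simp
qed

lemma kernel_complement:
  fixes \<phi> :: "'d::finite seq \<Rightarrow> complex^'e::finite"
  assumes V: "csubspace V" and lin: "Vector_Spaces.linear scaleS (*s) \<phi>"
  obtains P where "finite P" "cseq.independent P" "card P = vec.dim (\<phi> ` V)"
    "{x\<in>V. \<phi> x = 0} \<inter> cspan P \<subseteq> {0}" "V = setplus {x\<in>V. \<phi> x = 0} (cspan P)"
proof -
  obtain BW where BW: "BW \<subseteq> \<phi> ` V" "vec.independent BW" "\<phi> ` V \<subseteq> vec.span BW"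
      "card BW = vec.dim (\<phi> ` V)"
    by (rule vec.basis_exists)
  obtain P where P: "P \<subseteq> V" "inj_on \<phi> P" "BW = \<phi> ` P"
    using BW(1) unfolding subset_image_inj by blast
  have fin: "finite P"
    using vec.finiteI_independent[OF BW(2)] P(3) finite_image_iff[OF P(2)] by simp
  have inj_span: "inj_on \<phi> (cspan P)"
    using cseq_vec.linear_inj_on_span_independent_image[OF lin] P(2,3) BW(2) by simp
  have "{x\<in>V. \<phi> x = 0} \<inter> cspan P \<subseteq> {0}"
  proof
    fix x assume "x \<in> {x\<in>V. \<phi> x = 0} \<inter> cspan P"
    then show "x \<in> {0}"
      using inj_onD[OF inj_span, of x 0] cseq.span_zero cseq_vec.linear_0[OF lin] by auto
  qed
  moreover have "V = setplus {x\<in>V. \<phi> x = 0} (cspan P)"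
  proof
    have "cspan P \<subseteq> V"
      using P(1) V by (simp add: cseq.span_minimal)
    then show "setplus {x\<in>V. \<phi> x = 0} (cspan P) \<subseteq> V"
      by (intro setplus_subset[OF V]) auto
    show "V \<subseteq> setplus {x\<in>V. \<phi> x = 0} (cspan P)"
    proof
      fix x assume x: "x \<in> V"
      then have "\<phi> x \<in> \<phi> ` cspan P"
        using BW(3) cseq_vec.linear_span_image[OF lin, of P] P(3) by blast
      then obtain y where y: "y \<in> cspan P" "\<phi> y = \<phi> x"
        by auto
      then have "x - y \<in> {x\<in>V. \<phi> x = 0}"
        using x \<open>cspan P \<subseteq> V\<close> cseq.subspace_diff[OF V] cseq_vec.linear_diff[OF lin] by auto
      then show "x \<in> setplus {x\<in>V. \<phi> x = 0} (cspan P)"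
        unfolding setplus_def using y(1) by force
    qed
  qed
  ultimately show ?thesis
    using that fin independent_if_independent_image[OF lin fin P(2)] P(3) BW(2,4) card_image[OF P(2)]
    by simp
qed

lemma cdim_rank_nullity:
  fixes \<phi> :: "'d::finite seq \<Rightarrow> complex^'e::finite"
  assumes V: "csubspace V" and lin: "Vector_Spaces.linear scaleS (*s) \<phi>"
    and K: "cfinite_dim {x\<in>V. \<phi> x = 0}"
  shows "cfinite_dim V \<and> cdim V = cdim {x\<in>V. \<phi> x = 0} + vec.dim (\<phi> ` V)"
proof -
  obtain P where P: "finite P" "cseq.independent P" "card P = vec.dim (\<phi> ` V)"
    "{x\<in>V. \<phi> x = 0} \<inter> cspan P \<subseteq> {0}" "V = setplus {x\<in>V. \<phi> x = 0} (cspan P)"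
    using kernel_complement[OF V lin] by blast
  have "csubspace {x\<in>V. \<phi> x = 0}"
    using cseq.subspace_inter[OF V cseq_vec.linear_subspace_kernel[OF lin]] by (simp add: Int_def)
  then show ?thesis
    using cdim_setplus[OF _ K cseq.subspace_span cfinite_dim_span[OF P(1)] P(4)]
      cseq.dim_span_eq_card_independent[OF P(2)] P(3,5)
    by simp
qed

lemma exists_nontrivial_relation:
  fixes f :: "nat \<Rightarrow> 'd::finite seq"
  assumes B: "finite B" and span: "\<And>j. j < N \<Longrightarrow> f j \<in> cspan B" and N: "card B < N"
  shows "\<exists>c. (\<exists>j<N. c j \<noteq> 0) \<and> (\<Sum>j<N. scaleS (c j) (f j)) = 0"
proof (cases "inj_on f {..<N}")
  case False
  then obtain i j where ij: "i < N" "j < N" "i \<noteq> j" "f i = f j"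
    unfolding inj_on_def by auto
  define c where "c k = (if k = i then 1 else if k = j then -1 else (0::complex))" for k
  have "(\<Sum>k<N. scaleS (c k) (f k)) = (\<Sum>k\<in>{i, j}. scaleS (c k) (f k))"
    by (rule sum.mono_neutral_right) (auto simp: c_def ij)
  also have "\<dots> = 0"
    using ij by (simp add: c_def cseq.scale_minus_left)
  finally show ?thesis
    using ij by (intro exI[of _ c]) (auto simp: c_def)
next
  case True
  have "\<not> cseq.independent (f ` {..<N})"
    using cseq.independent_span_bound[OF B] span N True card_image by fastforce
  then obtain u where u: "\<exists>v\<in>f ` {..<N}. u v \<noteq> 0" "(\<Sum>v\<in>f ` {..<N}. scaleS (u v) v) = 0"
    using cseq.dependent_finite[of "f ` {..<N}"] by blast
  then show ?thesis
    by (intro exI[of _ "\<lambda>j. u (f j)"]) (auto simp: sum.reindex[OF True])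
qed

subsection \<open>Direct sums of families of subspaces\<close>

definition family_sum :: "'i set \<Rightarrow> ('i \<Rightarrow> 'd::finite seq set) \<Rightarrow> 'd seq set" where
  "family_sum I U = {(\<Sum>i\<in>I. f i) | f. \<forall>i\<in>I. f i \<in> U i}"

definition independent_family :: "'i set \<Rightarrow> ('i \<Rightarrow> 'd::finite seq set) \<Rightarrow> bool" where
  "independent_family I U \<longleftrightarrow> (\<forall>f. (\<forall>i\<in>I. f i \<in> U i) \<and> (\<Sum>i\<in>I. f i) = 0 \<longrightarrow> (\<forall>i\<in>I. f i = 0))"

lemma is_direct_sum_iff: "is_direct_sum I U V \<longleftrightarrow> V = family_sum I U \<and> independent_family I U"
  by (simp add: is_direct_sum_def family_sum_def independent_family_def)

lemma family_sum_empty [simp]: "family_sum {} U = {0}"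
  by (simp add: family_sum_def)

lemma family_sum_singleton [simp]: "family_sum {i} U = U i"
  by (auto simp: family_sum_def)

lemma independent_family_singleton: "independent_family {i} U"
  by (simp add: independent_family_def)

lemma family_sum_Un:
  assumes "finite I" "finite J" "I \<inter> J = {}"
  shows "family_sum (I \<union> J) U = setplus (family_sum I U) (family_sum J U)"
proof
  show "family_sum (I \<union> J) U \<subseteq> setplus (family_sum I U) (family_sum J U)"
    using assms by (fastforce simp: family_sum_def setplus_def sum.union_disjoint)
  show "setplus (family_sum I U) (family_sum J U) \<subseteq> family_sum (I \<union> J) U"
  proof
    fix x assume "x \<in> setplus (family_sum I U) (family_sum J U)"
    then obtain f g where fg: "x = (\<Sum>i\<in>I. f i) + (\<Sum>i\<in>J. g i)" "\<forall>i\<in>I. f i \<in> U i" "\<forall>i\<in>J. g i \<in> U i"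
      by (auto simp: family_sum_def setplus_def)
    define h where "h i = (if i \<in> I then f i else g i)" for i
    have "(\<Sum>i\<in>I. h i) = (\<Sum>i\<in>I. f i)" "(\<Sum>i\<in>J. h i) = (\<Sum>i\<in>J. g i)"
      using assms(3) by (auto simp: h_def intro!: sum.cong)
    then have "(\<Sum>i\<in>I \<union> J. h i) = x"
      using assms fg(1) by (simp add: sum.union_disjoint)
    moreover have "\<forall>i\<in>I \<union> J. h i \<in> U i"
      using fg by (auto simp: h_def)
    ultimately show "x \<in> family_sum (I \<union> J) U"
      unfolding family_sum_def by blast
  qed
qed

lemma sum_extend_zero: "J \<subseteq> I \<Longrightarrow> finite I \<Longrightarrow> (\<Sum>i\<in>I. if i \<in> J then f i else 0) = (\<Sum>i\<in>J. f i)"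
  by (simp add: sum.inter_restrict[symmetric] Int_absorb1)

lemma family_sum_mono:
  assumes "J \<subseteq> I" "finite I" "\<And>i. 0 \<in> U i"
  shows "family_sum J U \<subseteq> family_sum I U"
proof
  fix x assume "x \<in> family_sum J U"
  then obtain f where f: "x = (\<Sum>i\<in>J. f i)" "\<forall>i\<in>J. f i \<in> U i"
    by (auto simp: family_sum_def)
  then have "x = (\<Sum>i\<in>I. if i \<in> J then f i else 0)" "\<forall>i\<in>I. (if i \<in> J then f i else 0) \<in> U i"
    using assms sum_extend_zero[OF assms(1,2), of f] by auto
  then show "x \<in> family_sum I U"
    unfolding family_sum_def by blast
qed

lemma independent_family_subset:
  assumes "independent_family I U" "J \<subseteq> I" "finite I" "\<And>i. 0 \<in> U i"
  shows "independent_family J U"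
  unfolding independent_family_def
proof (intro allI impI ballI)
  fix f i
  assume f: "(\<forall>i\<in>J. f i \<in> U i) \<and> (\<Sum>i\<in>J. f i) = 0" and i: "i \<in> J"
  define h where "h i = (if i \<in> J then f i else 0)" for i
  have "(\<forall>i\<in>I. h i \<in> U i) \<and> (\<Sum>i\<in>I. h i) = 0"
    using f assms(4) sum_extend_zero[OF assms(2,3), of f] by (auto simp: h_def)
  then have "\<forall>i\<in>I. h i = 0"
    using assms(1) unfolding independent_family_def by blast
  moreover have "i \<in> I"
    using assms(2) i by blast
  ultimately have "h i = 0"
    by blast
  then show "f i = 0"
    using i by (simp add: h_def)
qed

lemma csubspace_family_sum:
  assumes "\<And>i. csubspace (U i)"
  shows "csubspace (family_sum I U)"
  unfolding cseq.subspace_def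
proof (intro conjI ballI allI)
  show "0 \<in> family_sum I U"
    using cseq.subspace_0[OF assms] unfolding family_sum_def by (intro CollectI exI[of _ "\<lambda>_. 0"]) auto
  fix x y c
  assume "x \<in> family_sum I U" "y \<in> family_sum I U"
  then obtain f g where f: "x = (\<Sum>i\<in>I. f i)" "\<forall>i\<in>I. f i \<in> U i"
    and g: "y = (\<Sum>i\<in>I. g i)" "\<forall>i\<in>I. g i \<in> U i"
    by (auto simp: family_sum_def)
  have "x + y = (\<Sum>i\<in>I. f i + g i)" "\<forall>i\<in>I. f i + g i \<in> U i"
    using f g cseq.subspace_add[OF assms] by (auto simp: sum.distrib)
  then show "x + y \<in> family_sum I U"
    unfolding family_sum_def by blast
  have "scaleS c x = (\<Sum>i\<in>I. scaleS c (f i))" "\<forall>i\<in>I. scaleS c (f i) \<in> U i"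
    using f cseq.subspace_scale[OF assms] by (auto simp: cseq.scale_sum_right)
  then show "scaleS c x \<in> family_sum I U"
    unfolding family_sum_def by blast
qed

lemma independent_family_Un:
  assumes fin: "finite I" "finite J" "I \<inter> J = {}" and U: "\<And>i. csubspace (U i)"
    and indep: "independent_family I U" "independent_family J U"
    and Int: "family_sum I U \<inter> family_sum J U \<subseteq> {0}"
  shows "independent_family (I \<union> J) U"
  unfolding independent_family_def
proof (intro allI impI)
  fix f
  assume f: "(\<forall>i\<in>I \<union> J. f i \<in> U i) \<and> (\<Sum>i\<in>I \<union> J. f i) = 0"
  define u where "u = (\<Sum>i\<in>I. f i)"
  define v where "v = (\<Sum>i\<in>J. f i)"
  have "u + v = 0"
    using f fin by (simp add: u_def v_def sum.union_disjoint)
  then have "u = (\<Sum>i\<in>J. - f i)"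
    by (simp add: v_def sum_negf eq_neg_iff_add_eq_0)
  then have "u \<in> family_sum J U"
    unfolding family_sum_def using f cseq.subspace_neg[OF U] by (intro CollectI exI[of _ "\<lambda>i. - f i"]) auto
  moreover have "u \<in> family_sum I U"
    unfolding family_sum_def u_def using f by auto
  ultimately
  have "u = 0" "v = 0"
    using Int \<open>u + v = 0\<close> by auto
  moreover have "\<forall>i\<in>I. f i = 0" if "u = 0"
    using indep(1) f that unfolding independent_family_def u_def by blast
  moreover have "\<forall>i\<in>J. f i = 0" if "v = 0"
    using indep(2) f that unfolding independent_family_def v_def by blast
  ultimately show "\<forall>i\<in>I \<union> J. f i = 0"
    by blast
qed

lemma independent_family_Un_Int:
  assumes fin: "finite I" "finite J" "I \<inter> J = {}" and U: "\<And>i. csubspace (U i)"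
    and indep: "independent_family (I \<union> J) U"
  shows "family_sum I U \<inter> family_sum J U \<subseteq> {0}"
proof
  fix x assume x: "x \<in> family_sum I U \<inter> family_sum J U"
  obtain f where f: "x = (\<Sum>i\<in>I. f i)" "\<forall>i\<in>I. f i \<in> U i"
    using x by (auto simp: family_sum_def)
  obtain g where g: "x = (\<Sum>i\<in>J. g i)" "\<forall>i\<in>J. g i \<in> U i"
    using x by (auto simp: family_sum_def)
  define h where "h i = (if i \<in> I then f i else - g i)" for i
  have "(\<Sum>i\<in>I. h i) = (\<Sum>i\<in>I. f i)" "(\<Sum>i\<in>J. h i) = (\<Sum>i\<in>J. - g i)"
    using fin(3) by (auto simp: h_def intro!: sum.cong)
  then have "(\<Sum>i\<in>I \<union> J. h i) = (\<Sum>i\<in>I. f i) - (\<Sum>i\<in>J. g i)"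
    using fin by (simp add: sum.union_disjoint sum_negf)
  moreover have "\<forall>i\<in>I \<union> J. h i \<in> U i"
    using f g cseq.subspace_neg[OF U] by (auto simp: h_def)
  moreover have "(\<Sum>i\<in>I \<union> J. h i) = 0"
    using calculation(1) f(1) g(1) by simp
  ultimately have "\<forall>i\<in>I \<union> J. h i = 0"
    using indep unfolding independent_family_def by blast
  then have "h i = 0" if "i \<in> I" for i
    using that by blast
  then have "\<forall>i\<in>I. f i = 0"
    by (simp add: h_def)
  then show "x \<in> {0}"
    using f(1) by simp
qed

lemma family_sum_reindex:
  assumes g: "inj_on g I" and L: "Vector_Spaces.linear scaleS scaleS L"
    and U: "\<And>i. i \<in> I \<Longrightarrow> U (g i) = L ` W i"
  shows "family_sum (g ` I) U = L ` family_sum I W"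
proof
  show "family_sum (g ` I) U \<subseteq> L ` family_sum I W"
  proof
    fix x assume "x \<in> family_sum (g ` I) U"
    then obtain f where f: "x = (\<Sum>i\<in>I. f (g i))" "\<forall>i\<in>I. f (g i) \<in> U (g i)"
      by (auto simp: family_sum_def sum.reindex[OF g])
    then have "\<forall>i\<in>I. \<exists>w. w \<in> W i \<and> f (g i) = L w"
      using U by blast
    then obtain w where w: "\<And>i. i \<in> I \<Longrightarrow> w i \<in> W i \<and> f (g i) = L (w i)"
      by metis
    then have "x = L (\<Sum>i\<in>I. w i)"
      using f(1) by (simp add: cseq_pair.linear_sum[OF L])
    then show "x \<in> L ` family_sum I W"
      using w unfolding family_sum_def by blast
  qed
  show "L ` family_sum I W \<subseteq> family_sum (g ` I) U"
  proof
    fix x assume "x \<in> L ` family_sum I W"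
    then obtain w where w: "x = L (\<Sum>i\<in>I. w i)" "\<forall>i\<in>I. w i \<in> W i"
      by (auto simp: family_sum_def)
    define f where "f j = L (w (inv_into I g j))" for j
    have "x = (\<Sum>j\<in>g ` I. f j)"
      using w(1) g by (simp add: sum.reindex f_def cseq_pair.linear_sum[OF L])
    moreover have "\<forall>j\<in>g ` I. f j \<in> U j"
      using w(2) U g by (auto simp: f_def)
    ultimately show "x \<in> family_sum (g ` I) U"
      unfolding family_sum_def by blast
  qed
qed

lemma independent_family_reindex:
  assumes g: "inj_on g I" and L: "Vector_Spaces.linear scaleS scaleS L" "inj L"
    and U: "\<And>i. i \<in> I \<Longrightarrow> U (g i) = L ` W i" and indep: "independent_family I W"
  shows "independent_family (g ` I) U"
  unfolding independent_family_def
proof (intro allI impI ballI)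
  fix f j
  assume f: "(\<forall>j\<in>g ` I. f j \<in> U j) \<and> (\<Sum>j\<in>g ` I. f j) = 0" and j: "j \<in> g ` I"
  then have "\<forall>i\<in>I. \<exists>w. w \<in> W i \<and> f (g i) = L w"
    using U by blast
  then obtain w where w: "\<And>i. i \<in> I \<Longrightarrow> w i \<in> W i \<and> f (g i) = L (w i)"
    by metis
  have "L (\<Sum>i\<in>I. w i) = L 0"
    using f w g by (simp add: sum.reindex cseq_pair.linear_sum[OF L(1)] cseq_pair.linear_0[OF L(1)])
  then have "(\<Sum>i\<in>I. w i) = 0"
    using L(2) by (simp add: inj_eq)
  moreover have "\<forall>i\<in>I. w i \<in> W i"
    using w by blast
  ultimately have "\<forall>i\<in>I. w i = 0"
    using indep unfolding independent_family_def by blast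
  then show "f j = 0"
    using j w cseq_pair.linear_0[OF L(1)] by auto
qed

lemma cdim_family_sum:
  assumes "finite I" "independent_family I U" "\<And>i. csubspace (U i)" "\<And>i. i \<in> I \<Longrightarrow> cfinite_dim (U i)"
  shows "cfinite_dim (family_sum I U) \<and> cdim (family_sum I U) = (\<Sum>i\<in>I. cdim (U i))"
  using assms
proof (induction I rule: finite_induct)
  case empty
  then show ?case
    using cfinite_dim_span[of "{}"] cdim_zero by simp
next
  case (insert j I)
  have disjoint: "{j} \<inter> I = {}"
    using insert(2) by auto
  have "independent_family I U"
    using independent_family_subset[OF insert(4)] insert(1) cseq.subspace_0[OF insert(5)] by blast
  then have IH: "cfinite_dim (family_sum I U) \<and> cdim (family_sum I U) = (\<Sum>i\<in>I. cdim (U i))"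
    using insert by blast
  have "family_sum {j} U \<inter> family_sum I U \<subseteq> {0}"
    by (rule independent_family_Un_Int) (use insert(1,4,5) disjoint in auto)
  then have "U j \<inter> family_sum I U \<subseteq> {0}"
    by simp
  moreover have "csubspace (U j)" "cfinite_dim (U j)"
    using insert(5,6) by auto
  ultimately have "cfinite_dim (setplus (U j) (family_sum I U)) \<and>
      cdim (setplus (U j) (family_sum I U)) = cdim (U j) + cdim (family_sum I U)"
    using cdim_setplus[of "U j" "family_sum I U"] csubspace_family_sum[of U I] insert(5) IH by blast
  moreover have "family_sum (insert j I) U = setplus (U j) (family_sum I U)"
    using family_sum_Un[of "{j}" I U] insert(1) disjoint by simp
  ultimately show ?case
    using IH insert(1,2) by simp
qed

subsection \<open>Shift-invariant subspaces\<close>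

lemma Tpow_adjoint_powers_independent:
  assumes y: "y \<noteq> 0" and zero: "(\<Sum>j<N. scaleS (c j) (Tpow (- int j) y)) = 0" and j: "j < N"
  shows "c j = 0"
proof (rule ccontr)
  assume "c j \<noteq> 0"
  define J where "J = (LEAST j. c j \<noteq> 0)"
  have J: "c J \<noteq> 0" "J \<le> j"
    using \<open>c j \<noteq> 0\<close> unfolding J_def by (rule LeastI, rule Least_le)
  have below_J: "c i = 0" if "i < J" for i
    using that not_less_Least unfolding J_def by blast
  define i0 where "i0 = (LEAST i. y i \<noteq> 0)"
  obtain i where "y i \<noteq> 0"
    using y by (auto simp: fun_eq_iff)
  then have i0: "y i0 \<noteq> 0"
    unfolding i0_def by (rule LeastI)
  have below_i0: "y i = 0" if "i < i0" for i
    using that not_less_Least unfolding i0_def by blast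
  \<comment> \<open>At index \<open>i0 + J\<close> only the \<open>J\<close>-th term of the relation survives.\<close>
  have "c i *s Tpow (- int i) y (i0 + J) = (if i = J then c J *s y i0 else 0)" for i
  proof (cases "J < i")
    case True
    then have "Tpow (- int i) y (i0 + J) = 0"
      using below_i0[of "i0 + J - i"] by (simp add: Tpow_adjoint_power_apply)
    then show ?thesis
      using True by simp
  qed (use below_J in \<open>auto simp: Tpow_adjoint_power_apply\<close>)
  then have "(\<Sum>i<N. scaleS (c i) (Tpow (- int i) y)) (i0 + J) = c J *s y i0"
    using J j by (simp add: sum_apply scaleS_apply)
  then show False
    using zero J(1) i0 by simp
qed

lemma Tpow_adjoint_invariant_trivial:
  assumes B: "finite B" "V \<subseteq> cspan B" and invariant: "\<And>x. x \<in> V \<Longrightarrow> Tpow (-1) x \<in> V"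
  shows "V \<subseteq> {0}"
proof
  fix y assume "y \<in> V"
  have powers: "Tpow (- int j) y \<in> V" for j
  proof (induction j)
    case (Suc j)
    then show ?case
      using invariant[OF Suc] Tpow_Tpow[of "-1" "- int j" y] by (simp add: algebra_simps)
  qed (simp add: \<open>y \<in> V\<close>)
  have "\<exists>c. (\<exists>j<Suc (card B). c j \<noteq> 0) \<and>
      (\<Sum>j<Suc (card B). scaleS (c j) (Tpow (- int j) y)) = 0"
    by (rule exists_nontrivial_relation[OF B(1)]) (use powers B(2) in auto)
  then show "y \<in> {0}"
    using Tpow_adjoint_powers_independent by blast
qed

definition delta_seq :: "nat \<Rightarrow> complex^'d \<Rightarrow> 'd::finite seq" where
  "delta_seq j v = (\<lambda>i. if i = j then v else 0)"

lemma l2_delta_seq: "delta_seq j v \<in> l2"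
proof -
  have "(\<lambda>i. (norm (delta_seq j v i))\<^sup>2) = (\<lambda>i. if i = j then (norm v)\<^sup>2 else 0)"
    by (auto simp: delta_seq_def)
  then show ?thesis
    by (simp add: l2_def)
qed

lemma Tpow_delta_seq_combination:
  assumes "\<exists>j<N. c j \<noteq> 0"
  obtains J where "c J \<noteq> 0"
    "Tpow (int J) (\<Sum>j<N. scaleS (c j) (delta_seq j v)) = delta_seq 0 (c J *s v)"
proof -
  define J where "J = Max {j. j < N \<and> c j \<noteq> 0}"
  have "J \<in> {j. j < N \<and> c j \<noteq> 0}"
    using assms unfolding J_def by (intro Max_in) auto
  then have J: "c J \<noteq> 0" "J < N"
    by auto
  have above_J: "c j = 0" if "J < j" "j < N" for j
  proof (rule ccontr)
    assume "c j \<noteq> 0"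
    then have "j \<le> J"
      unfolding J_def using that(2) by (intro Max_ge) auto
    then show False
      using that(1) by simp
  qed
  have "(\<Sum>j<N. scaleS (c j) (delta_seq j v)) i = (\<Sum>j<N. if j = i then c j *s v else 0)" for i
    unfolding sum_apply scaleS_apply delta_seq_def by (rule sum.cong) auto
  then have "(\<Sum>j<N. scaleS (c j) (delta_seq j v)) i = (if i < N then c i *s v else 0)" for i
    by (simp add: sum.delta)
  then have "Tpow (int J) (\<Sum>j<N. scaleS (c j) (delta_seq j v)) = delta_seq 0 (c J *s v)"
    using above_J J(2) by (auto simp: fun_eq_iff Tpow_apply delta_seq_def)
  then show ?thesis
    using that J(1) by blast
qed

lemma delta_seq_in_shift_invariant_finite_codim:
  assumes R: "csubspace R" "\<And>y. y \<in> R \<Longrightarrow> Tpow 1 y \<in> R"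
    and B: "finite B" "l2 \<subseteq> setplus R (cspan B)"
  shows "delta_seq 0 v \<in> R"
proof -
  have "\<exists>r. r \<in> R \<and> delta_seq j v - r \<in> cspan B" for j
  proof -
    obtain u w where "delta_seq j v = u + w" "u \<in> R" "w \<in> cspan B"
      using B(2) l2_delta_seq unfolding setplus_def by blast
    then show ?thesis
      by (intro exI[of _ u]) simp
  qed
  then obtain r where r: "\<And>j. r j \<in> R" "\<And>j. delta_seq j v - r j \<in> cspan B"
    by (metis choice)
  define N where "N = Suc (card B)"
  have "\<exists>c. (\<exists>j<N. c j \<noteq> 0) \<and> (\<Sum>j<N. scaleS (c j) (delta_seq j v - r j)) = 0"
    by (rule exists_nontrivial_relation[OF B(1)]) (auto simp: N_def r(2))
  then obtain c where c: "\<exists>j<N. c j \<noteq> 0" "(\<Sum>j<N. scaleS (c j) (delta_seq j v - r j)) = 0"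
    by blast
  \<comment> \<open>A nontrivial combination of the \<open>delta_seq j v\<close> lies in \<open>R\<close>; shifting it down by
    its last nonzero index leaves a multiple of \<open>delta_seq 0 v\<close>.\<close>
  define Y where "Y = (\<Sum>j<N. scaleS (c j) (delta_seq j v))"
  have "Y = (\<Sum>j<N. scaleS (c j) (r j))"
    using c(2) by (simp add: Y_def cseq.scale_right_diff_distrib sum_subtractf)
  then have "Y \<in> R"
    using r(1) by (simp add: cseq.subspace_sum cseq.subspace_scale R(1))
  have shifts: "Tpow (int n) y \<in> R" if "y \<in> R" for n y
  proof (induction n)
    case (Suc n)
    then show ?case
      using R(2)[OF Suc] Tpow_Tpow[of 1 "int n" y] by (simp add: add.commute)
  qed (simp add: that)
  obtain J where J: "c J \<noteq> 0" "Tpow (int J) Y = delta_seq 0 (c J *s v)"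
    using Tpow_delta_seq_combination[OF c(1)] unfolding Y_def by blast
  have "delta_seq 0 v = scaleS (inverse (c J)) (Tpow (int J) Y)"
    using J by (simp add: fun_eq_iff delta_seq_def scaleS_apply)
  then show ?thesis
    using shifts[OF \<open>Y \<in> R\<close>] cseq.subspace_scale[OF R(1)] by simp
qed

subsection \<open>The operators \<open>A\<^sub>\<kappa>\<close> and their kernels\<close>

lemma Akappa_apply: "Akappa p q a \<kappa> x j = (\<Sum>r\<in>{p..q}. a r *v Tpow (r - p - \<kappa>) x j)"
  by (simp add: Akappa_def)

lemma linear_Akappa: "Vector_Spaces.linear scaleS scaleS (Akappa p q a \<kappa>)"
  by (auto simp: Vector_Spaces.linear_iff cseq.vector_space_axioms Akappa_def fun_eq_iff
      Tpow_add_apply Tpow_scaleS_apply matrix_vector_right_distrib sum.distrib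
      vector_scalar_commute vec.scale_sum_right scaleS_apply)

lemma linear_Akappa_eval: "Vector_Spaces.linear scaleS (*s) (\<lambda>x. Akappa p q a \<kappa> x j)"
  by (simp add: Vector_Spaces.linear_iff cseq.vector_space_axioms vec.vector_space_axioms
      Akappa_apply Tpow_add_apply Tpow_scaleS_apply matrix_vector_right_distrib sum.distrib
      vector_scalar_commute vec.scale_sum_right)

lemma Akappa_Tpow_adjoint: "Akappa p q a \<kappa> (Tpow (-1) x) = Akappa p q a (\<kappa> + 1) x"
  by (rule ext) (simp add: Akappa_apply Tpow_Tpow algebra_simps)

lemma Tpow_Akappa: "Tpow 1 (Akappa p q a \<kappa> x) = Akappa p q a (\<kappa> - 1) x"
proof (rule ext)
  fix j
  have "Tpow s x (Suc j) = Tpow (s + 1) x j" for s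
    using fun_cong[OF Tpow_Tpow[of 1 s x], of j] by (simp add: Tpow_one_apply add.commute)
  then show "Tpow 1 (Akappa p q a \<kappa> x) j = Akappa p q a (\<kappa> - 1) x j"
    by (simp add: Akappa_apply Tpow_one_apply algebra_simps)
qed

lemma Tpow_adjoint_Akappa:
  assumes "q - p \<le> \<kappa>"
  shows "Tpow (-1) (Akappa p q a \<kappa> x) = Akappa p q a (\<kappa> + 1) x"
proof (rule ext)
  fix j
  have "Tpow (r - p - (\<kappa> + 1)) x = Tpow (-1) (Tpow (r - p - \<kappa>) x)" if "r \<in> {p..q}" for r
    using that assms Tpow_Tpow[of "-1" "r - p - \<kappa>" x] by (simp add: algebra_simps)
  then show "Tpow (-1) (Akappa p q a \<kappa> x) j = Akappa p q a (\<kappa> + 1) x j"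
    by (cases j) (simp_all add: Akappa_apply Tpow_adjoint_apply)
qed

lemma Akappa_eq_Akappa0: "Akappa p q a \<kappa> x = Akappa p q a 0 (Tpow (- \<kappa>) x)"
  by (rule ext) (simp add: Akappa_apply Tpow_Tpow)

lemma csubspace_Ker: "csubspace (Ker (Akappa p q a \<kappa>))"
  using cseq_pair.linear_0[OF linear_Akappa] csubspace_l2
  by (auto simp: Ker_def cseq.subspace_def cseq_pair.linear_add[OF linear_Akappa]
      cseq_pair.linear_scale[OF linear_Akappa])

lemma Ker_Akappa_Suc_subset: "Ker (Akappa p q a (\<kappa> + 1)) \<subseteq> Ker (Akappa p q a \<kappa>)"
  using Tpow_Akappa[of p q a "\<kappa> + 1"] by (auto simp: Ker_def) (metis Tpow_zero)

lemma Ker_Akappa_antimono: "\<kappa> \<le> \<kappa>' \<Longrightarrow> Ker (Akappa p q a \<kappa>') \<subseteq> Ker (Akappa p q a \<kappa>)"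
proof (induction \<kappa>' rule: int_ge_induct)
  case (step i)
  then show ?case
    using Ker_Akappa_Suc_subset[of p q a i] by blast
qed simp

lemma Tpow_adjoint_in_Ker_iff:
  "x \<in> l2 \<Longrightarrow> Tpow (-1) x \<in> Ker (Akappa p q a \<kappa>) \<longleftrightarrow> x \<in> Ker (Akappa p q a (\<kappa> + 1))"
  by (simp add: Ker_def Akappa_Tpow_adjoint l2_Tpow)

lemma Ker_Akappa_stable: "q - p \<le> \<kappa> \<Longrightarrow> Ker (Akappa p q a \<kappa>) = Ker (Akappa p q a (q - p))"
proof (induction \<kappa> rule: int_ge_induct)
  case (step i)
  have "Ker (Akappa p q a i) \<subseteq> Ker (Akappa p q a (i + 1))"
    using Tpow_adjoint_Akappa[OF step(1), of a] by (auto simp: Ker_def) (metis Tpow_zero)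
  then show ?case
    using Ker_Akappa_Suc_subset[of p q a i] step(2) by blast
qed simp

lemma Ker_Akappa_bottom: "Ker (Akappa p q a (q - p)) \<subseteq> Ker (Akappa p q a \<kappa>)"
  using Ker_Akappa_antimono[of \<kappa> "q - p" p q a] Ker_Akappa_stable[where p = p and q = q and \<kappa> = \<kappa>]
  by (cases "\<kappa> \<le> q - p") auto

lemma Ker_Akappa_eval_kernel:
  "{x \<in> Ker (Akappa p q a (\<kappa> - 1)). Akappa p q a \<kappa> x 0 = 0} = Ker (Akappa p q a \<kappa>)"
proof -
  have "Akappa p q a \<kappa> x = 0 \<longleftrightarrow> Akappa p q a (\<kappa> - 1) x = 0 \<and> Akappa p q a \<kappa> x 0 = 0" for x
    using eq_0_iff_Tpow_one[of "Akappa p q a \<kappa> x"] by (simp add: Tpow_Akappa)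
  then show ?thesis
    by (auto simp: Ker_def)
qed

lemma setplus_Ker_Tpow_adjoint_subset:
  "setplus (Ker (Akappa p q a \<kappa>)) (Tpow (-1) ` Ker (Akappa p q a \<kappa>)) \<subseteq> Ker (Akappa p q a (\<kappa> - 1))"
proof (rule setplus_subset[OF csubspace_Ker])
  show "Ker (Akappa p q a \<kappa>) \<subseteq> Ker (Akappa p q a (\<kappa> - 1))"
    using Ker_Akappa_Suc_subset[of p q a "\<kappa> - 1"] by simp
  show "Tpow (-1) ` Ker (Akappa p q a \<kappa>) \<subseteq> Ker (Akappa p q a (\<kappa> - 1))"
    using Tpow_adjoint_in_Ker_iff[of _ p q a "\<kappa> - 1"] by (auto simp: Ker_def)
qed

lemma Ker_Akappa_Int_Tpow_adjoint:
  "Ker (Akappa p q a \<kappa>) \<inter> Tpow (-1) ` Ker (Akappa p q a \<kappa>) \<subseteq> Tpow (-1) ` Ker (Akappa p q a (\<kappa> + 1))"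
  using Tpow_adjoint_in_Ker_iff[of _ p q a \<kappa>] by (auto simp: Ker_def)

subsection \<open>Consequences of the Fredholm property\<close>

locale fredholm_toeplitz =
  fixes p q :: int and a :: "int \<Rightarrow> complex^'d^'d::finite"
  assumes p_le_q: "p \<le> q" and fredholm: "fredholm_l2 (Akappa p q a (- p))"
begin

abbreviation K :: "int \<Rightarrow> 'd seq set" where
  "K \<kappa> \<equiv> Ker (Akappa p q a \<kappa>)"

lemma cfinite_dim_Ker: "cfinite_dim (K \<kappa>)"
proof -
  have base: "cfinite_dim (K (- p))"
    using fredholm by (auto simp: fredholm_l2_def cfinite_dim_def)
  show ?thesis
  proof (cases "- p \<le> \<kappa>")
    case True
    then show ?thesis
      using cfinite_dim_subset[OF Ker_Akappa_antimono base] by blast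
  next
    case False
    then have "\<kappa> \<le> - p"
      by simp
    then show ?thesis
    proof (induction \<kappa> rule: int_le_induct)
      case (step i)
      then show ?case
        using cdim_rank_nullity[OF csubspace_Ker[where p = p and q = q and a = a and \<kappa> = "i - 1"]
          linear_Akappa_eval[where p = p and q = q and a = a and \<kappa> = i and j = 0]]
        by (simp add: Ker_Akappa_eval_kernel)
    qed (use base in auto)
  qed
qed

lemma Ker_trivial:
  assumes "q - p \<le> \<kappa>"
  shows "K \<kappa> = {0}"
proof -
  obtain B where B: "finite B" "K (- p) \<subseteq> cspan B"
    using fredholm by (auto simp: fredholm_l2_def)
  have "K (q - p) \<subseteq> {0}"
  proof (rule Tpow_adjoint_invariant_trivial[OF B(1)])
    show "K (q - p) \<subseteq> cspan B"
      using Ker_Akappa_bottom[of p q a "- p"] B(2) by auto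
    show "Tpow (-1) x \<in> K (q - p)" if "x \<in> K (q - p)" for x
    proof -
      have "x \<in> K (q - p + 1)"
        using that Ker_Akappa_stable[where p = p and q = q and a = a and \<kappa> = "q - p + 1"] by simp
      then show ?thesis
        using Tpow_adjoint_in_Ker_iff[of x p q a "q - p"] by (simp add: Ker_def)
    qed
  qed
  then show ?thesis
    using Ker_Akappa_stable[OF assms] cseq.subspace_0[OF csubspace_Ker] by blast
qed

lemma delta_seq_in_range_Akappa0: "\<exists>x\<in>l2. Akappa p q a 0 x = delta_seq 0 v"
proof -
  define R where "R = Akappa p q a 0 ` l2"
  obtain B where B: "finite B" "l2 \<subseteq> setplus (Akappa p q a (- p) ` l2) (cspan B)"
    using fredholm by (auto simp: fredholm_l2_def)
  have range: "Akappa p q a \<kappa> x \<in> R" if "x \<in> l2" for \<kappa> x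
    using that Akappa_eq_Akappa0[of p q a \<kappa> x] l2_Tpow by (auto simp: R_def)
  have "delta_seq 0 v \<in> R"
  proof (rule delta_seq_in_shift_invariant_finite_codim[OF _ _ B(1)])
    show "csubspace R"
      unfolding R_def by (rule cseq_pair.linear_subspace_image[OF linear_Akappa csubspace_l2])
    show "Tpow 1 y \<in> R" if "y \<in> R" for y
      using that range Tpow_Akappa[of p q a 0] l2_Tpow by (auto simp: R_def)
    show "l2 \<subseteq> setplus R (cspan B)"
      using B(2) range by (fastforce simp: setplus_def)
  qed
  then show ?thesis
    by (auto simp: R_def)
qed

lemma cdim_Ker_pred:
  assumes "\<kappa> \<le> 0"
  shows "cdim (K (\<kappa> - 1)) = cdim (K \<kappa>) + CARD('d)"
proof -
  define \<phi> where "\<phi> x = Akappa p q a \<kappa> x 0" for x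
  have "\<phi> ` K (\<kappa> - 1) = UNIV"
  proof (intro subset_antisym subsetI)
    fix v :: "complex^'d"
    obtain x where x: "x \<in> l2" "Akappa p q a 0 x = delta_seq 0 v"
      using delta_seq_in_range_Akappa0 by blast
    have "Akappa p q a \<kappa> (Tpow \<kappa> x) = delta_seq 0 v"
      using x(2) assms by (simp add: Akappa_eq_Akappa0[of p q a \<kappa>] Tpow_Tpow)
    moreover have "Akappa p q a (\<kappa> - 1) (Tpow \<kappa> x) = Tpow 1 (Akappa p q a \<kappa> (Tpow \<kappa> x))"
      by (simp add: Tpow_Akappa)
    ultimately have "Tpow \<kappa> x \<in> K (\<kappa> - 1)" "\<phi> (Tpow \<kappa> x) = v"
      using l2_Tpow[OF x(1)] by (auto simp: Ker_def \<phi>_def fun_eq_iff Tpow_one_apply delta_seq_def)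
    then show "v \<in> \<phi> ` K (\<kappa> - 1)"
      by blast
  qed simp
  moreover have "{x \<in> K (\<kappa> - 1). \<phi> x = 0} = K \<kappa>"
    unfolding \<phi>_def by (rule Ker_Akappa_eval_kernel)
  ultimately show ?thesis
    using cdim_rank_nullity[OF csubspace_Ker linear_Akappa_eval[of p q a \<kappa> 0], folded \<phi>_def]
      cfinite_dim_Ker vec_dim_card by simp
qed

end

subsection \<open>Block decomposition of the kernels\<close>

definition kernel_blocks :: "int \<Rightarrow> int \<Rightarrow> (int \<times> nat) set" where
  "kernel_blocks n \<kappa> = {(k', r). \<kappa> < k' \<and> k' \<le> n \<and> int r < k' - \<kappa>}"

definition block :: "(int \<Rightarrow> 'd::finite seq set) \<Rightarrow> int \<times> nat \<Rightarrow> 'd seq set" where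
  "block D = (\<lambda>(k', r). Tpow (- int r) ` D k')"

lemma kernel_blocks_eq_Sigma: "kernel_blocks n \<kappa> = (SIGMA k:{\<kappa><..n}. {..<nat (k - \<kappa>)})"
  by (auto simp: kernel_blocks_def)

lemma finite_kernel_blocks: "finite (kernel_blocks n \<kappa>)"
  by (simp add: kernel_blocks_eq_Sigma)

lemma kernel_blocks_split:
  "kernel_blocks n \<kappa> = (\<lambda>k. (k, 0)) ` {\<kappa><..n} \<union> apsnd Suc ` kernel_blocks n (\<kappa> + 1)"
  "(\<lambda>k. (k, 0)) ` {\<kappa><..n} \<inter> apsnd Suc ` kernel_blocks n (\<kappa> + 1) = {}"
proof -
  show "kernel_blocks n \<kappa> = (\<lambda>k. (k, 0)) ` {\<kappa><..n} \<union> apsnd Suc ` kernel_blocks n (\<kappa> + 1)"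
  proof (intro subset_antisym subsetI)
    fix i assume i: "i \<in> kernel_blocks n \<kappa>"
    show "i \<in> (\<lambda>k. (k, 0)) ` {\<kappa><..n} \<union> apsnd Suc ` kernel_blocks n (\<kappa> + 1)"
    proof (cases "snd i")
      case 0
      then show ?thesis
        using i by (cases i) (auto simp: kernel_blocks_def)
    next
      case (Suc r)
      then have "(fst i, r) \<in> kernel_blocks n (\<kappa> + 1)" "i = apsnd Suc (fst i, r)"
        using i by (cases i; auto simp: kernel_blocks_def)+
      then show ?thesis
        by blast
    qed
  qed (auto simp: kernel_blocks_def)
qed auto

lemma inj_on_apsnd_Suc: "inj_on (apsnd Suc) A"
  by (auto simp: inj_on_def prod_eq_iff)

lemma kernel_blocks_pred:
  assumes "\<kappa> \<le> n"
  shows "kernel_blocks n (\<kappa> - 1) = ((\<lambda>k. (k, 0)) ` {\<kappa><..n} \<union> apsnd Suc ` kernel_blocks n \<kappa>) \<union> {(\<kappa>, 0)}"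
proof -
  have "{\<kappa> - 1<..n} = insert \<kappa> {\<kappa><..n}"
    using assms by auto
  then show ?thesis
    using kernel_blocks_split(1)[of n "\<kappa> - 1"] by auto
qed

lemma sum_kernel_blocks:
  fixes g :: "int \<Rightarrow> nat"
  shows "(\<Sum>i\<in>kernel_blocks n \<kappa>. g (fst i)) = (\<Sum>k\<in>{\<kappa><..n}. nat (k - \<kappa>) * g k)"
proof -
  have "(\<Sum>i\<in>kernel_blocks n \<kappa>. g (fst i)) = (\<Sum>k\<in>{\<kappa><..n}. \<Sum>r<nat (k - \<kappa>). g k)"
    unfolding kernel_blocks_eq_Sigma by (subst sum.Sigma) (auto simp: split_beta)
  then show ?thesis
    by simp
qed

lemma block_base [simp]: "block D (k, 0) = D k"
  by (simp add: block_def)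

lemma block_apsnd_Suc: "block D (apsnd Suc i) = Tpow (-1) ` block D i"
  by (cases i) (simp add: block_def image_image Tpow_Tpow algebra_simps)

lemma csubspace_block: "(\<And>k. csubspace (D k)) \<Longrightarrow> csubspace (block D i)"
  by (cases i) (simp add: block_def cseq_pair.linear_subspace_image[OF linear_Tpow])

lemma cdim_block:
  assumes "csubspace (D (fst i))" "cfinite_dim (D (fst i))"
  shows "cfinite_dim (block D i) \<and> cdim (block D i) = cdim (D (fst i))"
  using assms cdim_linear_image[OF linear_Tpow inj_Tpow_nonpos[of "- int (snd i)", simplified]]
  by (cases i) (simp add: block_def)

lemma family_sum_shift_blocks:
  "family_sum (apsnd Suc ` I) (block D) = Tpow (-1) ` family_sum I (block D)"
  by (rule family_sum_reindex) (simp_all add: inj_on_apsnd_Suc linear_Tpow block_apsnd_Suc)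

lemma independent_family_shift_blocks:
  "independent_family I (block D) \<Longrightarrow> independent_family (apsnd Suc ` I) (block D)"
  by (rule independent_family_reindex[where L = "Tpow (-1)"])
    (simp_all add: inj_on_apsnd_Suc linear_Tpow inj_Tpow_nonpos block_apsnd_Suc)

lemma weighted_tail_sum_diff:
  fixes s :: "int \<Rightarrow> int"
  assumes "\<kappa> \<le> n"
  shows "(\<Sum>k\<in>{\<kappa>..n}. (k - (\<kappa> - 1)) * s k) - (\<Sum>k\<in>{\<kappa> + 1..n}. (k - \<kappa>) * s k) = (\<Sum>k\<in>{\<kappa>..n}. s k)"
proof -
  have "{\<kappa>..n} = insert \<kappa> {\<kappa> + 1..n}"
    using assms by auto
  then have "(\<Sum>k\<in>{\<kappa>..n}. (k - \<kappa>) * s k) = (\<Sum>k\<in>{\<kappa> + 1..n}. (k - \<kappa>) * s k)"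
    by simp
  moreover have "(\<Sum>k\<in>{\<kappa>..n}. (k - (\<kappa> - 1)) * s k) = (\<Sum>k\<in>{\<kappa>..n}. (k - \<kappa>) * s k + s k)"
    by (rule sum.cong) (simp_all add: algebra_simps)
  ultimately show ?thesis
    by (simp add: sum.distrib)
qed

locale kernel_complements = fredholm_toeplitz p q a
  for p q :: int and a :: "int \<Rightarrow> complex^'d^'d::finite" +
  fixes D :: "int \<Rightarrow> 'd seq set"
  assumes D_subspace: "\<And>\<kappa>. csubspace (D \<kappa>)"
    and D_complement: "\<And>\<kappa>. Ker (Akappa p q a (\<kappa> - 1)) =
      setplus (setplus (Ker (Akappa p q a \<kappa>)) (Tpow (-1) ` Ker (Akappa p q a \<kappa>))) (D \<kappa>)"
    and D_Int: "\<And>\<kappa>. setplus (Ker (Akappa p q a \<kappa>)) (Tpow (-1) ` Ker (Akappa p q a \<kappa>)) \<inter> D \<kappa> = {0}"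
begin

lemma D_subset_Ker: "D \<kappa> \<subseteq> K (\<kappa> - 1)"
proof
  fix d assume "d \<in> D \<kappa>"
  moreover have "0 \<in> setplus (K \<kappa>) (Tpow (-1) ` K \<kappa>)"
    using cseq.subspace_0[OF csubspace_Ker] by (force simp: setplus_def)
  ultimately have "0 + d \<in> setplus (setplus (K \<kappa>) (Tpow (-1) ` K \<kappa>)) (D \<kappa>)"
    unfolding setplus_def by blast
  then show "d \<in> K (\<kappa> - 1)"
    using D_complement by simp
qed

lemma block_subspace: "csubspace (block D i)"
  using csubspace_block[OF D_subspace] .

lemma setplus_Ker_Tpow_adjoint_blocks:
  assumes P: "K \<kappa> = family_sum (kernel_blocks (q - p) \<kappa>) (block D)"
      "independent_family (kernel_blocks (q - p) \<kappa>) (block D)"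
    and P1: "K (\<kappa> + 1) = family_sum (kernel_blocks (q - p) (\<kappa> + 1)) (block D)"
  defines "I \<equiv> (\<lambda>k. (k, 0)) ` {\<kappa><..q - p} \<union> apsnd Suc ` kernel_blocks (q - p) \<kappa>"
  shows "setplus (K \<kappa>) (Tpow (-1) ` K \<kappa>) = family_sum I (block D) \<and> independent_family I (block D)"
proof -
  let ?U = "block D"
  \<comment> \<open>\<open>B\<close>: the unshifted blocks of \<open>K \<kappa>\<close>; \<open>S\<close>, \<open>T\<close>: the shifted blocks spanning
    \<open>T' K (\<kappa> + 1)\<close> and \<open>T' K \<kappa>\<close>.\<close>
  define B where "B = (\<lambda>k. (k, 0 :: nat)) ` {\<kappa><..q - p}"
  define S where "S = apsnd Suc ` kernel_blocks (q - p) (\<kappa> + 1)"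
  define T where "T = apsnd Suc ` kernel_blocks (q - p) \<kappa>"
  have fin: "finite B" "finite S" "finite T"
    by (simp_all add: B_def S_def T_def finite_kernel_blocks)
  have split: "kernel_blocks (q - p) \<kappa> = B \<union> S" "B \<inter> S = {}" "B \<inter> T = {}"
    using kernel_blocks_split[of "q - p" \<kappa>] by (auto simp: B_def S_def T_def)
  have S_sum: "family_sum S ?U = Tpow (-1) ` K (\<kappa> + 1)"
    unfolding S_def P1 by (rule family_sum_shift_blocks)
  have T_sum: "family_sum T ?U = Tpow (-1) ` K \<kappa>"
    unfolding T_def P(1) by (rule family_sum_shift_blocks)
  have K_split: "K \<kappa> = setplus (family_sum B ?U) (Tpow (-1) ` K (\<kappa> + 1))"
    by (simp only: P(1) split(1) family_sum_Un[OF fin(1,2) split(2)] S_sum)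
  have "family_sum B ?U \<inter> Tpow (-1) ` K \<kappa> \<subseteq> {0}"
  proof -
    have "family_sum B ?U \<subseteq> K \<kappa>"
      unfolding P(1) using split(1)
      by (intro family_sum_mono finite_kernel_blocks cseq.subspace_0[OF block_subspace]) auto
    then have "family_sum B ?U \<inter> Tpow (-1) ` K \<kappa> \<subseteq> family_sum B ?U \<inter> family_sum S ?U"
      using Ker_Akappa_Int_Tpow_adjoint[of p q a \<kappa>] S_sum by blast
    also have "\<dots> \<subseteq> {0}"
      using independent_family_Un_Int[OF fin(1,2) split(2) block_subspace] P(2) split(1) by simp
    finally show ?thesis .
  qed
  then have "independent_family (B \<union> T) ?U"
    using independent_family_Un[OF fin(1,3) split(3) block_subspace] T_sum
      independent_family_subset[OF P(2) _ finite_kernel_blocks cseq.subspace_0[OF block_subspace]]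
      independent_family_shift_blocks[OF P(2)] split(1)
    by (simp add: T_def)
  moreover have "setplus (K \<kappa>) (Tpow (-1) ` K \<kappa>)
      = setplus (setplus (family_sum B ?U) (Tpow (-1) ` K (\<kappa> + 1))) (Tpow (-1) ` K \<kappa>)"
    by (simp only: K_split[symmetric])
  moreover have "\<dots> = setplus (family_sum B ?U) (Tpow (-1) ` K \<kappa>)"
  proof (rule setplus_absorb[OF _ image_mono[OF Ker_Akappa_Suc_subset]])
    show "csubspace (Tpow (-1) ` K \<kappa>)"
      by (rule cseq_pair.linear_subspace_image[OF linear_Tpow csubspace_Ker])
    show "0 \<in> Tpow (-1) ` K (\<kappa> + 1)"
      using cseq.subspace_0[OF csubspace_Ker] by (metis Tpow_zero image_eqI)
  qed
  moreover have "\<dots> = family_sum (B \<union> T) ?U"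
    by (simp only: family_sum_Un[OF fin(1,3) split(3)] T_sum)
  ultimately show ?thesis
    by (simp add: I_def B_def T_def)
qed

lemma direct_sum_step:
  assumes \<kappa>: "\<kappa> \<le> q - p"
    and P: "K \<kappa> = family_sum (kernel_blocks (q - p) \<kappa>) (block D)"
      "independent_family (kernel_blocks (q - p) \<kappa>) (block D)"
    and P1: "K (\<kappa> + 1) = family_sum (kernel_blocks (q - p) (\<kappa> + 1)) (block D)"
  shows "K (\<kappa> - 1) = family_sum (kernel_blocks (q - p) (\<kappa> - 1)) (block D)
    \<and> independent_family (kernel_blocks (q - p) (\<kappa> - 1)) (block D)"
proof -
  define I where "I = (\<lambda>k. (k, 0)) ` {\<kappa><..q - p} \<union> apsnd Suc ` kernel_blocks (q - p) \<kappa>"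
  have I: "setplus (K \<kappa>) (Tpow (-1) ` K \<kappa>) = family_sum I (block D)" "independent_family I (block D)"
    using setplus_Ker_Tpow_adjoint_blocks[OF P P1] by (simp_all add: I_def)
  have "finite I" "(\<kappa>, 0) \<notin> I" "kernel_blocks (q - p) (\<kappa> - 1) = I \<union> {(\<kappa>, 0)}"
    using kernel_blocks_pred[OF \<kappa>] by (auto simp: I_def finite_kernel_blocks)
  then show ?thesis
    using D_complement[of \<kappa>] D_Int[of \<kappa>] family_sum_Un[of I "{(\<kappa>, 0)}" "block D"] I
      independent_family_Un[OF _ _ _ block_subspace I(2) independent_family_singleton]
    by simp
qed

lemma is_direct_sum_Ker: "is_direct_sum (kernel_blocks (q - p) \<kappa>) (block D) (K \<kappa>)"
proof -
  define P where "P \<kappa> \<longleftrightarrow> K \<kappa> = family_sum (kernel_blocks (q - p) \<kappa>) (block D)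
    \<and> independent_family (kernel_blocks (q - p) \<kappa>) (block D)" for \<kappa>
  have trivial: "P \<kappa>" if "q - p \<le> \<kappa>" for \<kappa>
  proof -
    have "kernel_blocks (q - p) \<kappa> = {}"
      using that by (auto simp: kernel_blocks_def)
    then show ?thesis
      using Ker_trivial[OF that] by (simp add: P_def independent_family_def)
  qed
  have "P \<kappa> \<and> P (\<kappa> + 1)" if "\<kappa> \<le> q - p" for \<kappa>
    using that
  proof (induction \<kappa> rule: int_le_induct)
    case base
    then show ?case
      using trivial by simp
  next
    case (step i)
    then show ?case
      using direct_sum_step[of i] by (simp add: P_def)
  qed
  then have "P \<kappa>"
    using trivial by (cases "\<kappa> \<le> q - p") auto
  then show ?thesis
    by (simp add: P_def is_direct_sum_iff)
qed

lemma cdim_Ker: "int (cdim (K \<kappa>)) = (\<Sum>k\<in>{\<kappa> + 1..q - p}. (k - \<kappa>) * int (cdim (D k)))"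
proof -
  have D: "csubspace (D k)" "cfinite_dim (D k)" for k
    using D_subspace cfinite_dim_subset[OF D_subset_Ker cfinite_dim_Ker] by auto
  then have block: "cfinite_dim (block D i)" "cdim (block D i) = cdim (D (fst i))" for i
    using cdim_block by blast+
  have "cdim (family_sum (kernel_blocks (q - p) \<kappa>) (block D))
      = (\<Sum>i\<in>kernel_blocks (q - p) \<kappa>. cdim (block D i))"
    using cdim_family_sum[of "kernel_blocks (q - p) \<kappa>" "block D"] is_direct_sum_Ker[of \<kappa>]
      finite_kernel_blocks block_subspace block(1)
    by (simp add: is_direct_sum_iff)
  then have "cdim (K \<kappa>) = (\<Sum>i\<in>kernel_blocks (q - p) \<kappa>. cdim (block D i))"
    using is_direct_sum_Ker[of \<kappa>] by (simp add: is_direct_sum_iff)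
  also have "\<dots> = (\<Sum>i\<in>kernel_blocks (q - p) \<kappa>. cdim (D (fst i)))"
    using block(2) by simp
  also have "\<dots> = (\<Sum>k\<in>{\<kappa><..q - p}. nat (k - \<kappa>) * cdim (D k))"
    by (rule sum_kernel_blocks)
  finally have "int (cdim (K \<kappa>)) = (\<Sum>k\<in>{\<kappa><..q - p}. (k - \<kappa>) * int (cdim (D k)))"
    by (simp add: of_nat_sum of_nat_mult)
  moreover have "{\<kappa><..q - p} = {\<kappa> + 1..q - p}"
    by auto
  ultimately show ?thesis
    by simp
qed

lemma sum_cdim_D_tail:
  assumes "\<kappa> \<le> 0"
  shows "(\<Sum>k\<in>{\<kappa>..q - p}. int (cdim (D k))) = int CARD('d)"
  using cdim_Ker[of "\<kappa> - 1"] cdim_Ker[of \<kappa>] cdim_Ker_pred[OF assms]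
    weighted_tail_sum_diff[of \<kappa> "q - p" "\<lambda>k. int (cdim (D k))"] p_le_q assms
  by simp

lemma cdim_D_eq_0:
  assumes "q - p < \<kappa> \<or> \<kappa> < 0"
  shows "cdim (D \<kappa>) = 0"
proof (cases "q - p < \<kappa>")
  case True
  then have "D \<kappa> = {0}"
    using D_subset_Ker[of \<kappa>] Ker_trivial[of "\<kappa> - 1"] cseq.subspace_0[OF D_subspace] by auto
  then show ?thesis
    using cdim_zero by simp
next
  case False
  then have "\<kappa> < 0" "{\<kappa>..q - p} = insert \<kappa> {\<kappa> + 1..q - p}"
    using assms p_le_q by auto
  then show ?thesis
    using sum_cdim_D_tail[of \<kappa>] sum_cdim_D_tail[of "\<kappa> + 1"] by simp
qed

lemma sum_cdim_D: "(\<Sum>\<kappa>\<in>{0..q - p}. cdim (D \<kappa>)) = CARD('d)"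
proof -
  have "int (\<Sum>\<kappa>\<in>{0..q - p}. cdim (D \<kappa>)) = int CARD('d)"
    using sum_cdim_D_tail[of 0] by (simp add: of_nat_sum)
  then show ?thesis
    by (simp only: of_nat_eq_iff)
qed

end

theorem propositionB3:
  fixes p q :: int and a :: "int \<Rightarrow> complex^'d^'d::finite"
    and D :: "int \<Rightarrow> 'd seq set"
  assumes pq: "p \<le> q"
    and fred: "fredholm_l2 (Akappa p q a (- p))"
    and Dsub: "\<And>\<kappa>. csubspace (D \<kappa>)"
    and Dsum: "\<And>\<kappa>. Ker (Akappa p q a (\<kappa> - 1)) =
                 setplus (setplus (Ker (Akappa p q a \<kappa>)) (Tpow (-1) ` Ker (Akappa p q a \<kappa>))) (D \<kappa>)"
    and Dint: "\<And>\<kappa>. setplus (Ker (Akappa p q a \<kappa>)) (Tpow (-1) ` Ker (Akappa p q a \<kappa>)) \<inter> D \<kappa> = {0}"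
  shows "(\<forall>\<kappa>. setplus (Ker (Akappa p q a \<kappa>)) (Tpow (-1) ` Ker (Akappa p q a \<kappa>))
                \<subseteq> Ker (Akappa p q a (\<kappa> - 1)))
       \<and> (\<forall>\<kappa>. \<kappa> \<ge> q - p \<longrightarrow> Ker (Akappa p q a \<kappa>) = {0})
       \<and> (\<forall>\<kappa>. \<kappa> < q - p \<longrightarrow>
             is_direct_sum {(k', r::nat). \<kappa> < k' \<and> k' \<le> q - p \<and> int r < k' - \<kappa>}
               (\<lambda>(k', r). Tpow (- int r) ` D k') (Ker (Akappa p q a \<kappa>))
           \<and> int (cdim (Ker (Akappa p q a \<kappa>))) =
               (\<Sum>k'\<in>{\<kappa>+1..q-p}. (k' - \<kappa>) * int (cdim (D k'))))
       \<and> (\<forall>\<kappa>. (\<kappa> > q - p \<or> \<kappa> < 0) \<longrightarrow> cdim (D \<kappa>) = 0)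
       \<and> (\<Sum>\<kappa>\<in>{0..q-p}. cdim (D \<kappa>)) = CARD('d)"
proof -
  interpret kernel_complements p q a D
    by unfold_locales (use pq fred Dsub Dsum Dint in auto)
  show ?thesis
    using setplus_Ker_Tpow_adjoint_subset[of p q a] Ker_trivial is_direct_sum_Ker cdim_Ker cdim_D_eq_0
      sum_cdim_D
    unfolding kernel_blocks_def block_def by auto
qed

end
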